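(* Let $m \ge 2$ and $n \ge 1$ be integers, let $K_m = (V, E)$ be the complete graph on $m$ vertices, and let $E = E_1 \cup \dots \cup E_n$ be a partition of its edge set into $n$ parts. Define the load balance $\alpha = \min_{i} \frac{|E_i| \cdot n}{|E|}$ and the replication factor $RF = \frac{\sum_{i=1}^n |V(E_i)|}{|V|}$, where $V(E_i)$ denotes the set of vertices incident to at least one edge of $E_i$. Then $$RF \ge \sqrt{\alpha} \cdot \sqrt{n} \cdot \sqrt{\frac{m-1}{m}}.$$ *)

theory Defs
  imports Complex_Main
begin

definition complete_edges :: "'a set \<Rightarrow> 'a set set" where
  "complete_edges V = {e. e \<subseteq> V \<and> card e = 2}"

definition incident_vertices :: "'a set set \<Rightarrow> 'a set" where
  "incident_vertices F = \<Union> F"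

definition load_balance :: "'a set set \<Rightarrow> nat \<Rightarrow> (nat \<Rightarrow> 'a set set) \<Rightarrow> real" where
  "load_balance E n P = Min ((\<lambda>i. real (card (P i)) * real n / real (card E)) ` {1..n})"

definition replication_factor :: "'a set \<Rightarrow> nat \<Rightarrow> (nat \<Rightarrow> 'a set set) \<Rightarrow> real" where
  "replication_factor V n P = (\<Sum>i=1..n. real (card (incident_vertices (P i)))) / real (card V)"

end

theory Submission
  imports Defs
begin

(* A part E_i touching k_i vertices has at most k_i (k_i - 1) / 2 \<le> k_i^2 / 2 edges, while
   by the load balance it has at least \<alpha> |E| / n = \<alpha> m (m - 1) / (2 n) edges.  Hence
   k_i \<ge> sqrt (\<alpha> m (m - 1) / n), and summing over the n parts and dividing by m gives the
   bound. *)

lemma two_mult_choose_two: "2 * (k choose 2) = k * (k - 1)"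
proof -
  have "even (k * (k - 1))" by (cases "even k") auto
  then show ?thesis by (simp add: choose_two)
qed

lemma two_mult_real_choose_two: "2 * real (k choose 2) = real k * (real k - 1)"
  using arg_cong[OF two_mult_choose_two[of k], of real] by (cases k) (auto simp: algebra_simps)

lemma card_complete_edges:
  assumes "finite V"
  shows "card (complete_edges V) = card V choose 2"
  using n_subsets[OF assms, of 2] by (simp add: complete_edges_def)

lemma card_le_choose_two_incident_vertices:
  assumes "finite (incident_vertices F)" and "\<And>e. e \<in> F \<Longrightarrow> card e = 2"
  shows "card F \<le> card (incident_vertices F) choose 2"
proof -
  have "F \<subseteq> {e. e \<subseteq> incident_vertices F \<and> card e = 2}"
    using assms(2) by (auto simp: incident_vertices_def)
  then have "card F \<le> card {e. e \<subseteq> incident_vertices F \<and> card e = 2}"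
    using assms(1) by (intro card_mono) auto
  then show ?thesis
    using n_subsets[OF assms(1)] by simp
qed

lemma two_card_le_square_incident_vertices:
  assumes "finite (incident_vertices F)" and "\<And>e. e \<in> F \<Longrightarrow> card e = 2"
  shows "2 * real (card F) \<le> real (card (incident_vertices F)) ^ 2"
proof -
  let ?k = "real (card (incident_vertices F))"
  have "2 * real (card F) \<le> ?k * (?k - 1)"
    using card_le_choose_two_incident_vertices[OF assms] two_mult_real_choose_two
    by (metis mult_le_cancel_left_pos of_nat_le_iff zero_less_numeral)
  then show ?thesis by (simp add: power2_eq_square algebra_simps)
qed

lemma load_balance_le:
  assumes "i \<in> {1..n}"
  shows "load_balance E n P \<le> real (card (P i)) * real n / real (card E)"
  unfolding load_balance_def using assms by (intro Min_le) auto

lemma square_incident_vertices_ge_load_balance: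
  assumes "finite V" and "card V \<ge> 2" and "i \<in> {1..n}" and "P i \<subseteq> complete_edges V"
  defines "m \<equiv> real (card V)"
  shows "load_balance (complete_edges V) n P * m * (m - 1) / real n
           \<le> real (card (incident_vertices (P i))) ^ 2"
proof -
  let ?E = "complete_edges V"
  have two_card_E: "2 * real (card ?E) = m * (m - 1)"
    using card_complete_edges[OF assms(1)] two_mult_real_choose_two m_def by simp
  have "card ?E > 0"
    using card_complete_edges[OF assms(1)] assms(2) by simp
  then have "load_balance ?E n P * real (card ?E) \<le> real (card (P i)) * real n"
    using load_balance_le[OF assms(3), of ?E P] by (simp add: pos_le_divide_eq)
  then have "load_balance ?E n P * (2 * real (card ?E)) \<le> 2 * real (card (P i)) * real n"
    by linarith
  then have "load_balance ?E n P * m * (m - 1) / real n \<le> 2 * real (card (P i))"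
    using assms(3) unfolding two_card_E by (simp add: pos_divide_le_eq mult.assoc)
  also have "\<dots> \<le> real (card (incident_vertices (P i))) ^ 2"
  proof (rule two_card_le_square_incident_vertices)
    have "incident_vertices (P i) \<subseteq> V"
      using assms(4) by (auto simp: incident_vertices_def complete_edges_def)
    then show "finite (incident_vertices (P i))"
      using assms(1) finite_subset by blast
  qed (use assms(4) in \<open>auto simp: complete_edges_def\<close>)
  finally show ?thesis .
qed

theorem theorem3:
  fixes V :: "'a set" and m n :: nat and P :: "nat \<Rightarrow> 'a set set"
  assumes "finite V" and "card V = m" and "m \<ge> 2" and "n \<ge> 1"
    and "\<Union> (P ` {1..n}) = complete_edges V"
    and "\<And>i j. i \<in> {1..n} \<Longrightarrow> j \<in> {1..n} \<Longrightarrow> i \<noteq> j \<Longrightarrow> P i \<inter> P j = {}"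
  shows "replication_factor V n P \<ge>
           sqrt (load_balance (complete_edges V) n P) * sqrt (real n) * sqrt ((real m - 1) / real m)"
proof -
  define \<alpha> where "\<alpha> = load_balance (complete_edges V) n P"
  define c where "c = \<alpha> * real m * (real m - 1) / real n"
  have "sqrt c \<le> real (card (incident_vertices (P i)))" if "i \<in> {1..n}" for i
    using square_incident_vertices_ge_load_balance[OF assms(1) _ that, of P] that assms(2,3,5)
    unfolding c_def \<alpha>_def by (metis UN_upper real_le_lsqrt of_nat_0_le_iff)
  then have "real n * sqrt c \<le> (\<Sum>i=1..n. real (card (incident_vertices (P i))))"
    using sum_mono[of "{1..n}" "\<lambda>_. sqrt c"] by simp
  moreover have "sqrt \<alpha> * sqrt (real n) * sqrt ((real m - 1) / real m) = real n * sqrt c / real m"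
  proof -
    have "sqrt \<alpha> * sqrt (real n) * sqrt ((real m - 1) / real m)
          = sqrt (\<alpha> * real n * ((real m - 1) / real m))"
      by (simp only: real_sqrt_mult)
    also have "\<alpha> * real n * ((real m - 1) / real m) = (real n / real m)^2 * c"
      unfolding c_def using assms(3,4) by (simp add: field_simps power2_eq_square)
    finally show ?thesis by (simp add: real_sqrt_mult)
  qed
  ultimately show ?thesis
    unfolding replication_factor_def \<alpha>_def using assms(2,3) by (simp add: divide_right_mono)
qed

end
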